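(* Consider an $n$-level optimization problem with scalar variables $x_1,\dots,x_n\in\mathbb{R}$, and let $x_i^*(x_1,\dots,x_{i-1})$, $2\le i\le n$, be the (assumed unique and differentiable) best-response maps: $x_n^*(x_1,\dots,x_{n-1})=\operatorname{argmin}_{x_n} f_n(x_1,\dots,x_n)$ and, for $k=n-1,\dots,2$, $x_k^*(x_1,\dots,x_{k-1})=\operatorname{argmin}_{x_k} f_k(x_1,\dots,x_k,x_{k+1}^*,\dots,x_n^* )$ with the higher-index best responses evaluated recursively. Define $X_1(x_1)=x_1$ and $X_i(x_1)=x_i^*(x_1,X_2(x_1),\dots,X_{i-1}(x_1))$ for $i\ge 2$. Suppose there is $K\ge 0$ with $\big|\frac{\partial x_i^*}{\partial x_j}\big|\le K$ everywhere for all $1\le j<i\le n$. Let $M,N,S\ge 0$ be arbitrary constants and $J=\max\{M,N,K,S,1\}$. Then there is a constant $C$, independent of $i$ and $x_1$, such that for every $2\le i\le n$ and every $x_1\in\mathbb{R}$, $$\Big|\frac{\mathrm{d} X_i}{\mathrm{d} x_1}(x_1)\Big|\le C\big((i-1)J\big)^{i-1}.$$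
   Context: $\frac{\partial x_i^*}{\partial x_j}$ is the partial derivative of the best-response map $x_i^*$ with respect to its argument $x_j$; $\frac{\mathrm{d} X_i}{\mathrm{d} x_1}$ is the total derivative of the composite best response with respect to $x_1$. (In the paper $M,N,S$ are bounds on other derivatives; they play no role in the hypotheses here beyond entering $J$.) *)

theory Defs
  imports "HOL-Analysis.Analysis"
begin

text \<open>Points of R^n are encoded as functions nat => real; only the coordinates 1..n matter.
  A best-response map x_i^* is encoded as a function of such a point that only depends
  on the coordinates 1..i-1.\<close>

definition depends_only_on :: "nat set \<Rightarrow> ((nat \<Rightarrow> real) \<Rightarrow> real) \<Rightarrow> bool" where
  "depends_only_on A g \<longleftrightarrow> (\<forall>p q. (\<forall>j\<in>A. p j = q j) \<longrightarrow> g p = g q)"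

definition differentiable_first :: "nat \<Rightarrow> ((nat \<Rightarrow> real) \<Rightarrow> real) \<Rightarrow> (nat \<Rightarrow> real) \<Rightarrow> bool" where
  "differentiable_first m g p \<longleftrightarrow>
     (\<exists>D::nat \<Rightarrow> real. \<forall>e>0. \<exists>d>0. \<forall>h::nat \<Rightarrow> real.
        (\<forall>j. j \<notin> {1..m} \<longrightarrow> h j = 0) \<longrightarrow> sqrt (\<Sum>j=1..m. (h j)\<^sup>2) < d \<longrightarrow>
        \<bar>g (\<lambda>j. p j + h j) - g p - (\<Sum>j=1..m. D j * h j)\<bar> \<le> e * sqrt (\<Sum>j=1..m. (h j)\<^sup>2))"

definition partial :: "((nat \<Rightarrow> real) \<Rightarrow> real) \<Rightarrow> nat \<Rightarrow> (nat \<Rightarrow> real) \<Rightarrow> real" where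
  "partial g j p = deriv (\<lambda>t. g (p(j := t))) (p j)"

primrec fillup :: "(nat \<Rightarrow> (nat \<Rightarrow> real) \<Rightarrow> real) \<Rightarrow> nat \<Rightarrow> nat \<Rightarrow> (nat \<Rightarrow> real) \<Rightarrow> (nat \<Rightarrow> real)" where
  "fillup xs k 0 p = p"
| "fillup xs k (Suc s) p = (let q = fillup xs k s p in q(k + s + 1 := xs (k + s + 1) q))"

text \<open>Composite best responses: X_1(x_1) = x_1, X_i(x_1) = x_i^*(x_1, X_2(x_1), ..., X_{i-1}(x_1)).\<close>
definition Xcomp :: "(nat \<Rightarrow> (nat \<Rightarrow> real) \<Rightarrow> real) \<Rightarrow> nat \<Rightarrow> real \<Rightarrow> real" where
  "Xcomp xs i x1 = fillup xs 1 (i - 1) (\<lambda>j. if j = 1 then x1 else 0) i"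

end

theory Submission
  imports Defs
begin

text \<open>By the chain rule, \<open>X\<^sub>i' = (\<Sum>j<i. \<partial>\<^sub>jx\<^sub>i\<^sup>* \<cdot> X\<^sub>j')\<close>, so \<open>|\<partial>\<^sub>jx\<^sub>i\<^sup>*| \<le> K\<close> and
  induction on \<open>i\<close> give
  \<open>|X\<^sub>i'| \<le> K(1 + (1+K) + \<dots> + (1+K)\<^sup>i\<^sup>-\<^sup>2) \<le> (1+K)\<^sup>i\<^sup>-\<^sup>1\<close>.
  Since \<open>(i-1)J \<ge> 1\<close>, the constant \<open>C = (1+K)\<^sup>n\<close> works.\<close>

definition has_gradient_first ::
    "nat \<Rightarrow> ((nat \<Rightarrow> real) \<Rightarrow> real) \<Rightarrow> (nat \<Rightarrow> real) \<Rightarrow> (nat \<Rightarrow> real) \<Rightarrow> bool" where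
  "has_gradient_first m g D p \<longleftrightarrow>
     (\<forall>e>0. \<exists>d>0. \<forall>h. (\<forall>j. j \<notin> {1..m} \<longrightarrow> h j = 0) \<longrightarrow> L2_set h {1..m} < d \<longrightarrow>
        \<bar>g (\<lambda>j. p j + h j) - g p - (\<Sum>j=1..m. D j * h j)\<bar> \<le> e * L2_set h {1..m})"

lemma differentiable_first_iff_has_gradient_first:
  "differentiable_first m g p \<longleftrightarrow> (\<exists>D. has_gradient_first m g D p)"
  by (simp add: differentiable_first_def has_gradient_first_def L2_set_def)

lemma DERIV_eventually_increment_le:
  assumes "(f has_real_derivative f') (at x)"
  shows "eventually (\<lambda>t. \<bar>f t - f x\<bar> \<le> (\<bar>f'\<bar> + 1) * \<bar>t - x\<bar>) (at x)"
proof -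
  have "((\<lambda>t. (f t - f x) / (t - x)) \<longlongrightarrow> f') (at x)"
    using assms by (simp add: has_field_derivative_iff)
  then have "eventually (\<lambda>t. dist ((f t - f x) / (t - x)) f' < 1) (at x)"
    by (rule tendstoD) simp
  then show ?thesis
  proof eventually_elim
    case (elim t)
    then have "\<bar>(f t - f x) / (t - x)\<bar> \<le> \<bar>f'\<bar> + 1"
      unfolding dist_real_def by linarith
    then have "\<bar>(f t - f x) / (t - x)\<bar> * \<bar>t - x\<bar> \<le> (\<bar>f'\<bar> + 1) * \<bar>t - x\<bar>"
      by (rule mult_right_mono) simp
    then show ?case
      by (cases "t = x") (simp_all add: abs_divide)
  qed
qed

lemma has_gradient_first_chain:
  fixes g :: "(nat \<Rightarrow> real) \<Rightarrow> real" and u :: "nat \<Rightarrow> real \<Rightarrow> real"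
  assumes grad: "has_gradient_first m g D (\<lambda>k. u k x)"
    and du: "\<And>k. k \<in> {1..m} \<Longrightarrow> (u k has_real_derivative u' k) (at x)"
    and frozen: "\<And>k t. k \<notin> {1..m} \<Longrightarrow> u k t = u k x"
  shows "((\<lambda>t. g (\<lambda>k. u k t)) has_real_derivative (\<Sum>j=1..m. D j * u' j)) (at x)"
proof -
  define h where "h t k = u k t - u k x" for t k
  define r where "r t = g (\<lambda>k. u k t) - g (\<lambda>k. u k x) - (\<Sum>j=1..m. D j * h t j)" for t
  define L where "L = (\<Sum>j=1..m. \<bar>u' j\<bar> + 1)"
  have L_nonneg: "L \<ge> 0"
    unfolding L_def by (intro sum_nonneg) simp
  have h_outside: "h t j = 0" if "j \<notin> {1..m}" for t j
    using frozen[OF that] by (simp add: h_def)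
  have h_norm: "eventually (\<lambda>t. L2_set (h t) {1..m} \<le> L * \<bar>t - x\<bar>) (at x)"
  proof -
    have "eventually (\<lambda>t. \<forall>j\<in>{1..m}. \<bar>h t j\<bar> \<le> (\<bar>u' j\<bar> + 1) * \<bar>t - x\<bar>) (at x)"
      unfolding h_def
      by (intro eventually_ball_finite ballI DERIV_eventually_increment_le du) auto
    then show ?thesis
    proof eventually_elim
      case (elim t)
      have "L2_set (h t) {1..m} \<le> (\<Sum>j=1..m. \<bar>h t j\<bar>)"
        by (rule L2_set_le_sum_abs)
      also have "\<dots> \<le> (\<Sum>j=1..m. (\<bar>u' j\<bar> + 1) * \<bar>t - x\<bar>)"
        using elim by (intro sum_mono) auto
      finally show ?case
        by (simp add: L_def sum_distrib_right)
    qed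
  qed
  have remainder: "((\<lambda>t. r t / (t - x)) \<longlongrightarrow> 0) (at x)"
  proof (rule tendstoI)
    fix \<epsilon> :: real
    assume "\<epsilon> > 0"
    define e where "e = \<epsilon> / (2 * (L + 1))"
    have "e > 0"
      using \<open>\<epsilon> > 0\<close> L_nonneg by (simp add: e_def)
    have eL: "e * L < \<epsilon>"
      using \<open>\<epsilon> > 0\<close> L_nonneg by (simp add: e_def field_simps add_nonneg_pos)
    from \<open>e > 0\<close> obtain d where "d > 0" and d: "\<forall>h. (\<forall>j. j \<notin> {1..m} \<longrightarrow> h j = 0) \<longrightarrow>
        L2_set h {1..m} < d \<longrightarrow>
        \<bar>g (\<lambda>j. u j x + h j) - g (\<lambda>k. u k x) - (\<Sum>j=1..m. D j * h j)\<bar> \<le> e * L2_set h {1..m}"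
      using grad unfolding has_gradient_first_def by blast
    have "eventually (\<lambda>t. t \<noteq> x \<and> \<bar>t - x\<bar> < d / (L + 1)) (at x)"
      using \<open>d > 0\<close> L_nonneg
      by (auto simp: eventually_at dist_real_def intro!: exI[of _ "d / (L + 1)"])
    with h_norm show "eventually (\<lambda>t. dist (r t / (t - x)) 0 < \<epsilon>) (at x)"
    proof eventually_elim
      case (elim t)
      have "L2_set (h t) {1..m} \<le> L * \<bar>t - x\<bar>"
        using elim by simp
      also have "\<dots> \<le> (L + 1) * \<bar>t - x\<bar>"
        by (simp add: mult_right_mono)
      also have "\<dots> < d"
        using elim L_nonneg by (simp add: pos_less_divide_eq mult.commute)
      finally have "L2_set (h t) {1..m} < d" .
      then have "\<bar>g (\<lambda>j. u j x + h t j) - g (\<lambda>k. u k x) - (\<Sum>j=1..m. D j * h t j)\<bar>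
          \<le> e * L2_set (h t) {1..m}"
        using d h_outside by blast
      moreover have "(\<lambda>j. u j x + h t j) = (\<lambda>k. u k t)"
        by (simp add: h_def)
      ultimately have "\<bar>r t\<bar> \<le> e * L2_set (h t) {1..m}"
        by (simp add: r_def)
      also have "\<dots> \<le> e * (L * \<bar>t - x\<bar>)"
        using elim \<open>e > 0\<close> by (intro mult_left_mono) auto
      also have "\<dots> < \<epsilon> * \<bar>t - x\<bar>"
        using elim eL by (simp add: mult.assoc[symmetric])
      finally show ?case
        using elim by (simp add: dist_real_def abs_divide divide_less_eq)
    qed
  qed
  have "((\<lambda>t. (\<Sum>j=1..m. D j * ((u j t - u j x) / (t - x))) + r t / (t - x))
      \<longlongrightarrow> (\<Sum>j=1..m. D j * u' j) + 0) (at x)"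
    using du remainder by (intro tendsto_intros) (auto simp: has_field_derivative_iff)
  moreover have "(\<Sum>j=1..m. D j * ((u j t - u j x) / (t - x))) + r t / (t - x)
      = (g (\<lambda>k. u k t) - g (\<lambda>k. u k x)) / (t - x)" for t
  proof -
    have "(\<Sum>j=1..m. D j * ((u j t - u j x) / (t - x))) = (\<Sum>j=1..m. D j * h t j) / (t - x)"
      by (simp add: h_def sum_divide_distrib)
    then show ?thesis
      by (simp add: r_def add_divide_distrib[symmetric])
  qed
  ultimately show ?thesis
    unfolding has_field_derivative_iff by simp
qed

lemma has_gradient_first_partial:
  assumes grad: "has_gradient_first m g D p" and j: "j \<in> {1..m}"
  shows "partial g j p = D j"
proof -
  have "((\<lambda>t. g (\<lambda>k. (p(j := t)) k)) has_real_derivative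
      (\<Sum>i=1..m. D i * (if i = j then 1 else 0))) (at (p j))"
    using grad j by (intro has_gradient_first_chain) auto
  moreover have "(\<Sum>i=1..m. D i * (if i = j then 1 else 0)) = D j"
    using j by (simp add: if_distrib cong: if_cong)
  ultimately show ?thesis
    unfolding partial_def fun_upd_def by (simp add: DERIV_imp_deriv)
qed

lemma fillup_outside: "j \<notin> {k+1..k+s} \<Longrightarrow> fillup xs k s p j = p j"
  by (induction s) (auto simp: Let_def)

lemma fillup_add: "j \<le> k + s \<Longrightarrow> fillup xs k (s + r) p j = fillup xs k s p j"
  by (induction r) (auto simp: Let_def)

lemma Xcomp_1: "Xcomp xs 1 = (\<lambda>x1. x1)"
  by (rule ext) (simp add: Xcomp_def)

lemma fillup_eq_Xcomp:
  assumes "2 \<le> i"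
  shows "fillup xs 1 (i - 2) (\<lambda>j. if j = 1 then x1 else 0)
    = (\<lambda>k. if k \<in> {1..i-1} then Xcomp xs k x1 else 0)"
proof
  fix k
  show "fillup xs 1 (i - 2) (\<lambda>j. if j = 1 then x1 else 0) k
    = (if k \<in> {1..i-1} then Xcomp xs k x1 else 0)"
  proof (cases "k \<in> {1..i-1}")
    case True
    then have "i - 2 = (k - 1) + (i - 1 - k)"
      using assms by auto
    then have "fillup xs 1 (i - 2) (\<lambda>j. if j = 1 then x1 else 0) k
        = fillup xs 1 (k - 1) (\<lambda>j. if j = 1 then x1 else 0) k"
      using True by (simp only:) (rule fillup_add, simp)
    with True show ?thesis
      by (simp add: Xcomp_def)
  next
    case False
    then have "k \<notin> {1+1..1+(i-2)}" "k \<noteq> 1"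
      using assms by auto
    with False show ?thesis
      using fillup_outside[of k 1 "i - 2" xs] by auto
  qed
qed

lemma Xcomp_rec:
  assumes "2 \<le> i"
  shows "Xcomp xs i x1 = xs i (\<lambda>k. if k \<in> {1..i-1} then Xcomp xs k x1 else 0)"
proof -
  have "i - 1 = Suc (i - 2)"
    using assms by simp
  then have "Xcomp xs i x1 = xs i (fillup xs 1 (i - 2) (\<lambda>j. if j = 1 then x1 else 0))"
    using assms by (simp add: Xcomp_def Let_def)
  then show ?thesis
    by (simp only: fillup_eq_Xcomp[OF assms])
qed

lemma sum_mult_one_plus_power: "(\<Sum>k=1..m. K * (1 + K) ^ (k - 1)) = (1 + K) ^ m - (1::real)"
  by (induction m) (auto simp: algebra_simps)

lemma Xcomp_has_derivative_le:
  assumes xs_diff: "\<forall>i\<in>{2..n}. \<forall>p. differentiable_first (i - 1) (xs i) p"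
    and K_nonneg: "K \<ge> 0"
    and K_bound: "\<forall>i\<in>{2..n}. \<forall>j\<in>{1..<i}. \<forall>p. \<bar>partial (xs i) j p\<bar> \<le> K"
    and i: "1 \<le> i" "i \<le> n"
  shows "\<exists>d. (Xcomp xs i has_real_derivative d) (at x1) \<and> \<bar>d\<bar> \<le> (1 + K) ^ (i - 1)"
  using i
proof (induction i arbitrary: x1 rule: less_induct)
  case (less i)
  show ?case
  proof (cases "i = 1")
    case True
    then show ?thesis
      using Xcomp_1[of xs] by (auto intro!: exI[of _ 1] DERIV_ident)
  next
    case False
    with less.prems have i2: "2 \<le> i"
      by simp
    have "\<forall>k\<in>{1..i-1}. \<exists>d. (Xcomp xs k has_real_derivative d) (at x1) \<and> \<bar>d\<bar> \<le> (1 + K) ^ (k - 1)"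
      using less.IH less.prems i2 by auto
    then obtain d where d: "\<And>k. k \<in> {1..i-1} \<Longrightarrow> (Xcomp xs k has_real_derivative d k) (at x1)"
      and d_le: "\<And>k. k \<in> {1..i-1} \<Longrightarrow> \<bar>d k\<bar> \<le> (1 + K) ^ (k - 1)"
      by metis
    define u where "u k t = (if k \<in> {1..i-1} then Xcomp xs k t else 0)" for k t
    obtain D where D: "has_gradient_first (i - 1) (xs i) D (\<lambda>k. u k x1)"
      using xs_diff i2 less.prems differentiable_first_iff_has_gradient_first by fastforce
    have "((\<lambda>t. xs i (\<lambda>k. u k t)) has_real_derivative (\<Sum>j=1..i-1. D j * d j)) (at x1)"
      using D d by (intro has_gradient_first_chain) (auto simp: u_def)
    moreover have "(\<lambda>t. xs i (\<lambda>k. u k t)) = Xcomp xs i"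
      using Xcomp_rec[OF i2] by (auto simp: u_def)
    ultimately have deriv: "(Xcomp xs i has_real_derivative (\<Sum>j=1..i-1. D j * d j)) (at x1)"
      by simp
    have D_le: "\<bar>D j\<bar> \<le> K" if "j \<in> {1..i-1}" for j
    proof -
      have "j \<in> {1..<i}"
        using that i2 by auto
      then have "\<bar>partial (xs i) j (\<lambda>k. u k x1)\<bar> \<le> K"
        using K_bound i2 less.prems by simp
      then show ?thesis
        by (simp add: has_gradient_first_partial[OF D that])
    qed
    have "\<bar>\<Sum>j=1..i-1. D j * d j\<bar> \<le> (\<Sum>j=1..i-1. K * (1 + K) ^ (j - 1))"
      using D_le d_le K_nonneg
      by (intro sum_abs[THEN order_trans] sum_mono) (simp add: abs_mult mult_mono)
    also have "\<dots> = (1 + K) ^ (i - 1) - 1"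
      by (rule sum_mult_one_plus_power)
    finally show ?thesis
      using deriv by auto
  qed
qed

theorem lemma7:
  fixes n :: nat
    and f :: "nat \<Rightarrow> (nat \<Rightarrow> real) \<Rightarrow> real"
    and xs :: "nat \<Rightarrow> (nat \<Rightarrow> real) \<Rightarrow> real"
    and K M N S J :: real
  assumes f_dom: "\<forall>k\<in>{2..n}. depends_only_on {1..n} (f k)"
    and xs_dom: "\<forall>i\<in>{2..n}. depends_only_on {1..i-1} (xs i)"
    and best_response: "\<forall>k\<in>{2..n}. \<forall>p t. t \<noteq> xs k p \<longrightarrow>
            f k (fillup xs k (n - k) (p(k := xs k p))) < f k (fillup xs k (n - k) (p(k := t)))"
    and xs_diff: "\<forall>i\<in>{2..n}. \<forall>p. differentiable_first (i - 1) (xs i) p"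
    and K_nonneg: "K \<ge> 0"
    and K_bound: "\<forall>i\<in>{2..n}. \<forall>j\<in>{1..<i}. \<forall>p. \<bar>partial (xs i) j p\<bar> \<le> K"
    and M_nonneg: "M \<ge> 0" and N_nonneg: "N \<ge> 0" and S_nonneg: "S \<ge> 0"
    and J_def: "J = Max {M, N, K, S, 1}"
  shows "\<exists>C. \<forall>i\<in>{2..n}. \<forall>x1. \<bar>deriv (Xcomp xs i) x1\<bar> \<le> C * ((real i - 1) * J) ^ (i - 1)"
proof (intro exI[of _ "(1 + K) ^ n"] ballI allI)
  fix i x1
  assume i: "i \<in> {2..n}"
  obtain d where d: "(Xcomp xs i has_real_derivative d) (at x1)"
    and d_le: "\<bar>d\<bar> \<le> (1 + K) ^ (i - 1)"
    using Xcomp_has_derivative_le[OF xs_diff K_nonneg K_bound, of i x1] i by auto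
  have "J \<ge> 1"
    unfolding J_def by (intro Max_ge) auto
  moreover have "real i - 1 \<ge> 1"
    using i by auto
  ultimately have "1 \<le> ((real i - 1) * J) ^ (i - 1)"
    using mult_mono[of 1 "real i - 1" 1 J] by (intro one_le_power) simp
  have "\<bar>deriv (Xcomp xs i) x1\<bar> \<le> (1 + K) ^ (i - 1)"
    using DERIV_imp_deriv[OF d] d_le by simp
  also have "\<dots> \<le> (1 + K) ^ n"
    using i K_nonneg by (intro power_increasing) auto
  also have "\<dots> \<le> (1 + K) ^ n * ((real i - 1) * J) ^ (i - 1)"
    using \<open>1 \<le> ((real i - 1) * J) ^ (i - 1)\<close> K_nonneg
    by (simp add: mult_le_cancel_left1)
  finally show "\<bar>deriv (Xcomp xs i) x1\<bar> \<le> (1 + K) ^ n * ((real i - 1) * J) ^ (i - 1)" .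
qed

end
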